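(* Let $R$ and $S$ be commutative rings with identity, $f:R\to S$ a surjective ring homomorphism, and $J$ a nonzero proper ideal of $S$. Then $R\bowtie^f J$ is a properly zipped ring if and only if $R$ is a properly zipped ring.
   Context: $R\bowtie^f J:=\{(r,f(r)+j)\mid r\in R,\ j\in J\}$, a subring of $R\times S$. A commutative ring $A$ is properly zipped if whenever a prime ideal $\mathfrak{p}$ of $A$ contains the intersection of a family $\{\mathfrak{p}_i\}_i$ of prime ideals of $A$, then $\mathfrak{p}_i\subseteq\mathfrak{p}$ for some $i$. *)

theory Defs
  imports "HOL-Algebra.Algebra"
begin

definition amalgamation ::
  "('a, 'm) ring_scheme \<Rightarrow> ('b, 'n) ring_scheme \<Rightarrow> ('a \<Rightarrow> 'b) \<Rightarrow> 'b set \<Rightarrow> ('a \<times> 'b) ring"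
  where "amalgamation R S f J =
    (RDirProd R S) \<lparr> carrier := {(r, f r \<oplus>\<^bsub>S\<^esub> j) | r j. r \<in> carrier R \<and> j \<in> J} \<rparr>"

definition properly_zipped :: "('a, 'm) ring_scheme \<Rightarrow> bool"
  where "properly_zipped A \<longleftrightarrow>
    (\<forall>P q. (\<forall>p\<in>P. primeideal p A) \<longrightarrow> primeideal q A \<longrightarrow> \<Inter>P \<subseteq> q \<longrightarrow>
       (\<exists>p\<in>P. p \<subseteq> q))"

end

theory Submission
  imports Defs
begin

text \<open>Both projections of \<open>A = R \<bowtie>\<^sup>f J\<close> are surjective ring homomorphisms (the second one
  because \<open>f\<close> is), and being properly zipped passes to surjective images; this gives one
  direction, and also shows that \<open>S\<close> is properly zipped whenever \<open>R\<close> is. Conversely, the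
  kernels \<open>0 \<times> J\<close> of the first and \<open>f\<inverse>(J) \<times> 0\<close> of the second projection multiply to zero, so
  every prime of \<open>A\<close> contains one of them. A family of primes whose intersection lies in a
  prime \<open>q\<close> therefore splits into two subfamilies one of which already has its intersection
  in \<open>q\<close>; its members correspond to primes of \<open>R\<close> resp. \<open>S\<close>, where the zipping property
  applies.\<close>

section \<open>Prime ideals and surjective homomorphisms\<close>

lemma (in primeideal) carrier_not_subset: "\<not> carrier R \<subseteq> I"
  using I_notcarr a_subset by blast

lemma (in primeideal) annihilating_subset_cases:
  assumes "A \<subseteq> carrier R" "B \<subseteq> carrier R" "\<forall>a\<in>A. \<forall>b\<in>B. a \<otimes> b = \<zero>"
  shows "A \<subseteq> I \<or> B \<subseteq> I"
proof (rule ccontr)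
  assume "\<not> ?thesis"
  then obtain a b where a: "a \<in> A" "a \<notin> I" and b: "b \<in> B" "b \<notin> I"
    by blast
  have "a \<otimes> b \<in> I"
    using assms(3) a(1) b(1) by simp
  then show False
    using I_prime assms(1,2) a b by blast
qed

lemma (in primeideal) Inter_Un_subset_cases:
  assumes "\<forall>p\<in>P1 \<union> P2. ideal p R" "\<Inter>(P1 \<union> P2) \<subseteq> I"
  shows "\<Inter>P1 \<inter> carrier R \<subseteq> I \<or> \<Inter>P2 \<inter> carrier R \<subseteq> I"
proof (rule ccontr)
  assume "\<not> ?thesis"
  then obtain a b where a: "a \<in> \<Inter>P1" "a \<in> carrier R" "a \<notin> I"
    and b: "b \<in> \<Inter>P2" "b \<in> carrier R" "b \<notin> I"
    by blast
  have "a \<otimes> b \<in> p" if "p \<in> P1 \<union> P2" for p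
  proof -
    interpret p: ideal p R
      using assms(1) that by blast
    show ?thesis
      using that a b p.I_r_closed p.I_l_closed by blast
  qed
  then have "a \<otimes> b \<in> I"
    using assms(2) by blast
  then show False
    using I_prime a b by blast
qed

lemma primeideal_subset_carrier: "primeideal P R \<Longrightarrow> P \<subseteq> carrier R"
  using additive_subgroup.a_subset ideal.axioms(1) primeideal.axioms(1) by blast

lemma (in ring_hom_ring) ideal_image_memD:
  assumes "ideal I R" "a_kernel R S h \<subseteq> I" "x \<in> carrier R" "h x \<in> h ` I"
  shows "x \<in> I"
proof -
  interpret I: ideal I R by fact
  obtain y where y: "y \<in> I" "h x = h y"
    using assms(4) by blast
  then have "x \<in> a_kernel R S h +> y"
    using homeq_imp_rcos I.a_subset assms(3) by blast
  then obtain k where "k \<in> a_kernel R S h" "x = k \<oplus> y"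
    by (auto simp: a_r_coset_def')
  then show "x \<in> I"
    using assms(2) y(1) I.a_closed by blast
qed

lemma (in ring_hom_ring) primeideal_image:
  assumes "cring S" "h ` carrier R = carrier S" "primeideal P R" "a_kernel R S h \<subseteq> P"
  shows "primeideal (h ` P) S"
proof (rule primeidealI)
  interpret P: primeideal P R by fact
  note image_memD = ideal_image_memD[OF P.is_ideal assms(4)]
  have surj: "\<exists>x\<in>carrier R. y = h x" if "y \<in> carrier S" for y
    using that assms(2) by blast
  show "ideal (h ` P) S"
  proof (rule idealI)
    show "subgroup (h ` P) (add_monoid S)"
      using group_hom.subgroup_img_is_subgroup[OF a_group_hom P.a_subgroup] .
    fix a x assume "a \<in> h ` P" "x \<in> carrier S"
    then obtain p z where "p \<in> P" "a = h p" "z \<in> carrier R" "x = h z"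
      using surj by blast
    moreover have "x \<otimes>\<^bsub>S\<^esub> a = h (z \<otimes> p)" "a \<otimes>\<^bsub>S\<^esub> x = h (p \<otimes> z)"
      using calculation P.Icarr by simp_all
    ultimately show "x \<otimes>\<^bsub>S\<^esub> a \<in> h ` P" "a \<otimes>\<^bsub>S\<^esub> x \<in> h ` P"
      using P.I_l_closed P.I_r_closed by (metis image_eqI)+
  qed (rule S.ring_axioms)
  show "carrier S \<noteq> h ` P"
  proof
    assume "carrier S = h ` P"
    then have "h \<one> \<in> h ` P"
      using S.one_closed hom_one by metis
    then show False
      using image_memD P.I_notcarr P.one_imp_carrier R.one_closed by metis
  qed
  fix a b assume ab: "a \<in> carrier S" "b \<in> carrier S" "a \<otimes>\<^bsub>S\<^esub> b \<in> h ` P"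
  obtain x y where xy: "x \<in> carrier R" "y \<in> carrier R" "a = h x" "b = h y"
    using surj ab(1,2) by meson
  then have "h (x \<otimes> y) \<in> h ` P"
    using ab(3) by simp
  then have "x \<in> P \<or> y \<in> P"
    using image_memD xy(1,2) P.I_prime by simp
  then show "a \<in> h ` P \<or> b \<in> h ` P"
    using xy(3,4) by blast
qed (rule assms(1))

section \<open>Properly zipped rings\<close>

lemma properly_zippedD:
  "\<lbrakk>properly_zipped A; \<forall>p\<in>P. primeideal p A; primeideal q A; \<Inter>P \<subseteq> q\<rbrakk> \<Longrightarrow> \<exists>p\<in>P. p \<subseteq> q"
  unfolding properly_zipped_def by blast

lemma (in ring_hom_ring) properly_zipped_image:
  assumes "cring R" "h ` carrier R = carrier S" "properly_zipped R"
  shows "properly_zipped S"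
  unfolding properly_zipped_def
proof (intro allI impI)
  fix P q assume P: "\<forall>p\<in>P. primeideal p S" and q: "primeideal q S" and sub: "\<Inter>P \<subseteq> q"
  define pre where "pre p = {x \<in> carrier R. h x \<in> p}" for p
  have "P \<noteq> {}"
    using sub primeideal.carrier_not_subset[OF q] by auto
  then have inter: "\<Inter>(pre ` P) \<subseteq> pre q"
    using sub by (auto simp: pre_def)
  have pre_prime: "primeideal (pre p) R" if "primeideal p S" for p
    unfolding pre_def using primeideal_vimage[OF assms(1) that] .
  have "\<forall>p'\<in>pre ` P. primeideal p' R"
    using P pre_prime by blast
  then have "\<exists>p'\<in>pre ` P. p' \<subseteq> pre q"
    by (rule properly_zippedD[OF assms(3) _ pre_prime[OF q] inter])
  then obtain p where p: "p \<in> P" "pre p \<subseteq> pre q"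
    by blast
  have "p \<subseteq> q"
  proof
    fix y assume "y \<in> p"
    then have "y \<in> carrier S"
      using P p(1) primeideal_subset_carrier by blast
    then obtain x where "x \<in> carrier R" "y = h x"
      using assms(2) by (metis imageE)
    then show "y \<in> q"
      using p(2) \<open>y \<in> p\<close> by (auto simp: pre_def)
  qed
  then show "\<exists>p\<in>P. p \<subseteq> q"
    using p(1) by blast
qed

lemma (in ring_hom_ring) properly_zipped_over_kernel:
  assumes "cring S" "h ` carrier R = carrier S" "properly_zipped S"
    and P: "\<forall>p\<in>P. primeideal p R \<and> a_kernel R S h \<subseteq> p"
    and q: "primeideal q R" and sub: "\<Inter>P \<inter> carrier R \<subseteq> q"
  shows "\<exists>p\<in>P. p \<subseteq> q"
proof -
  note image_memD = ideal_image_memD[OF primeideal.axioms(1)]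
  have "P \<noteq> {}"
    using sub primeideal.carrier_not_subset[OF q] by auto
  then obtain p0 where p0: "p0 \<in> P"
    by blast
  have "a_kernel R S h \<subseteq> \<Inter>P \<inter> carrier R"
    using P ideal.Icarr[OF kernel_is_ideal] by blast
  then have Kq: "a_kernel R S h \<subseteq> q"
    using sub by (rule order_trans)
  have inter: "\<Inter>((\<lambda>p. h ` p) ` P) \<subseteq> h ` q"
  proof
    fix y assume y: "y \<in> \<Inter>((\<lambda>p. h ` p) ` P)"
    then obtain x where x: "x \<in> p0" "y = h x"
      using p0 by blast
    have "x \<in> carrier R"
      using primeideal_subset_carrier P p0 x(1) by blast
    then have "x \<in> \<Inter>P \<inter> carrier R"
      using image_memD P y x(2) by blast
    then show "y \<in> h ` q"
      using sub x(2) by blast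
  qed
  have "\<forall>p'\<in>(\<lambda>p. h ` p) ` P. primeideal p' S"
    using primeideal_image[OF assms(1,2)] P by blast
  then have "\<exists>p'\<in>(\<lambda>p. h ` p) ` P. p' \<subseteq> h ` q"
    by (rule properly_zippedD[OF assms(3) _ primeideal_image[OF assms(1,2) q Kq] inter])
  then obtain p where p: "p \<in> P" "h ` p \<subseteq> h ` q"
    by blast
  have "p \<subseteq> q"
    using image_memD[OF q Kq] primeideal_subset_carrier P p by blast
  then show ?thesis
    using p(1) by blast
qed

lemma properly_zipped_if_kernels_annihilate:
  assumes h1: "ring_hom_ring A B1 h1" "cring B1" "h1 ` carrier A = carrier B1" "properly_zipped B1"
    and h2: "ring_hom_ring A B2 h2" "cring B2" "h2 ` carrier A = carrier B2" "properly_zipped B2"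
    and annihilate: "\<forall>x\<in>a_kernel A B1 h1. \<forall>y\<in>a_kernel A B2 h2. x \<otimes>\<^bsub>A\<^esub> y = \<zero>\<^bsub>A\<^esub>"
  shows "properly_zipped A"
  unfolding properly_zipped_def
proof (intro allI impI)
  fix P q assume P: "\<forall>p\<in>P. primeideal p A" and q: "primeideal q A" and sub: "\<Inter>P \<subseteq> q"
  interpret q: primeideal q A by fact
  define P1 where "P1 = {p \<in> P. a_kernel A B1 h1 \<subseteq> p}"
  define P2 where "P2 = {p \<in> P. a_kernel A B2 h2 \<subseteq> p}"
  have "a_kernel A B1 h1 \<subseteq> carrier A" "a_kernel A B2 h2 \<subseteq> carrier A"
    by (simp_all add: a_kernel_def')
  then have "a_kernel A B1 h1 \<subseteq> p \<or> a_kernel A B2 h2 \<subseteq> p" if "p \<in> P" for p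
    using primeideal.annihilating_subset_cases[OF _ _ _ annihilate] P that by blast
  then have P_Un: "P = P1 \<union> P2"
    by (auto simp: P1_def P2_def)
  have "\<forall>p\<in>P1 \<union> P2. ideal p A"
    using P primeideal.axioms(1) unfolding P_Un[symmetric] by blast
  then have "\<Inter>P1 \<inter> carrier A \<subseteq> q \<or> \<Inter>P2 \<inter> carrier A \<subseteq> q"
    by (rule q.Inter_Un_subset_cases) (use sub P_Un in simp)
  then have "\<exists>p\<in>P1 \<union> P2. p \<subseteq> q"
  proof
    assume "\<Inter>P1 \<inter> carrier A \<subseteq> q"
    moreover have "\<forall>p\<in>P1. primeideal p A \<and> a_kernel A B1 h1 \<subseteq> p"
      using P by (simp add: P1_def)
    ultimately show ?thesis
      using ring_hom_ring.properly_zipped_over_kernel[OF h1 _ q] by blast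
  next
    assume "\<Inter>P2 \<inter> carrier A \<subseteq> q"
    moreover have "\<forall>p\<in>P2. primeideal p A \<and> a_kernel A B2 h2 \<subseteq> p"
      using P by (simp add: P2_def)
    ultimately show ?thesis
      using ring_hom_ring.properly_zipped_over_kernel[OF h2 _ q] by blast
  qed
  then show "\<exists>p\<in>P. p \<subseteq> q"
    unfolding P_Un .
qed

section \<open>The amalgamated algebra\<close>

lemma RDirProd_mult [simp]: "(a, b) \<otimes>\<^bsub>RDirProd R S\<^esub> (c, d) = (a \<otimes>\<^bsub>R\<^esub> c, b \<otimes>\<^bsub>S\<^esub> d)"
  and RDirProd_add [simp]: "(a, b) \<oplus>\<^bsub>RDirProd R S\<^esub> (c, d) = (a \<oplus>\<^bsub>R\<^esub> c, b \<oplus>\<^bsub>S\<^esub> d)"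
  and RDirProd_one [simp]: "\<one>\<^bsub>RDirProd R S\<^esub> = (\<one>\<^bsub>R\<^esub>, \<one>\<^bsub>S\<^esub>)"
  and RDirProd_zero [simp]: "\<zero>\<^bsub>RDirProd R S\<^esub> = (\<zero>\<^bsub>R\<^esub>, \<zero>\<^bsub>S\<^esub>)"
  by (simp_all add: RDirProd_def DirProd_def monoid.defs)

lemma RDirProd_a_inv:
  assumes "ring R" "ring S" "a \<in> carrier R" "b \<in> carrier S"
  shows "\<ominus>\<^bsub>RDirProd R S\<^esub> (a, b) = (\<ominus>\<^bsub>R\<^esub> a, \<ominus>\<^bsub>S\<^esub> b)"
proof -
  interpret R: ring R by fact
  interpret S: ring S by fact
  interpret D: ring "RDirProd R S" using RDirProd_ring assms by blast
  show ?thesis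
    by (rule D.minus_equality) (use assms in \<open>auto simp: RDirProd_carrier R.l_neg S.l_neg\<close>)
qed

lemma amalgamation_carrier:
  "carrier (amalgamation R S f J) = {(r, f r \<oplus>\<^bsub>S\<^esub> j) | r j. r \<in> carrier R \<and> j \<in> J}"
  by (simp add: amalgamation_def)

lemma amalgamation_ops [simp]:
  "monoid.mult (amalgamation R S f J) = monoid.mult (RDirProd R S)"
  "ring.add (amalgamation R S f J) = ring.add (RDirProd R S)"
  "monoid.one (amalgamation R S f J) = monoid.one (RDirProd R S)"
  "ring.zero (amalgamation R S f J) = ring.zero (RDirProd R S)"
  by (simp_all add: amalgamation_def)

lemma amalgamation_carrier_subset:
  assumes "f \<in> ring_hom R S" "ring S" "J \<subseteq> carrier S"
  shows "carrier (amalgamation R S f J) \<subseteq> carrier R \<times> carrier S"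
  using assms by (auto simp: amalgamation_carrier ring.ring_simprules ring_hom_closed)

lemma subcring_amalgamation:
  assumes "cring R" "cring S" "f \<in> ring_hom R S" "ideal J S"
  shows "subcring (carrier (amalgamation R S f J)) (RDirProd R S)"
proof -
  interpret R: cring R by fact
  interpret S: cring S by fact
  interpret J: ideal J S by fact
  interpret D: ring "RDirProd R S" using RDirProd_ring R.ring_axioms S.ring_axioms by blast
  interpret f: ring_hom_ring R S f using ring_hom_ringI2 R.ring_axioms S.ring_axioms assms(3) by blast
  let ?H = "carrier (amalgamation R S f J)"
  have H_sub: "?H \<subseteq> carrier (RDirProd R S)"
    using amalgamation_carrier_subset[OF assms(3) S.ring_axioms J.a_subset]
    by (simp add: RDirProd_carrier)
  show ?thesis
  proof (rule D.subcringI[OF D.subringI[OF H_sub]])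
    show "\<one>\<^bsub>RDirProd R S\<^esub> \<in> ?H"
      by (auto simp: amalgamation_carrier intro!: exI[of _ "\<one>\<^bsub>R\<^esub>"] exI[of _ "\<zero>\<^bsub>S\<^esub>"])
  next
    fix x assume "x \<in> ?H"
    then obtain r j where x: "x = (r, f r \<oplus>\<^bsub>S\<^esub> j)" "r \<in> carrier R" "j \<in> J"
      by (auto simp: amalgamation_carrier)
    have "\<ominus>\<^bsub>RDirProd R S\<^esub> x = (\<ominus>\<^bsub>R\<^esub> r, f (\<ominus>\<^bsub>R\<^esub> r) \<oplus>\<^bsub>S\<^esub> \<ominus>\<^bsub>S\<^esub> j)"
      using x by (simp add: RDirProd_a_inv[OF R.ring_axioms S.ring_axioms] S.minus_add)
    then show "\<ominus>\<^bsub>RDirProd R S\<^esub> x \<in> ?H"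
      using x J.a_inv_closed by (auto simp: amalgamation_carrier)
  next
    fix x y assume "x \<in> ?H" "y \<in> ?H"
    then obtain r j r' j' where x: "x = (r, f r \<oplus>\<^bsub>S\<^esub> j)" "r \<in> carrier R" "j \<in> J"
      and y: "y = (r', f r' \<oplus>\<^bsub>S\<^esub> j')" "r' \<in> carrier R" "j' \<in> J"
      by (auto simp: amalgamation_carrier)
    have j: "j \<in> carrier S" "j' \<in> carrier S" using x y by auto
    have "x \<otimes>\<^bsub>RDirProd R S\<^esub> y = (r \<otimes>\<^bsub>R\<^esub> r', f (r \<otimes>\<^bsub>R\<^esub> r') \<oplus>\<^bsub>S\<^esub>
       (f r \<otimes>\<^bsub>S\<^esub> j' \<oplus>\<^bsub>S\<^esub> j \<otimes>\<^bsub>S\<^esub> f r' \<oplus>\<^bsub>S\<^esub> j \<otimes>\<^bsub>S\<^esub> j'))"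
      using x y j by (simp add: S.l_distr S.r_distr S.a_ac)
    moreover have "f r \<otimes>\<^bsub>S\<^esub> j' \<oplus>\<^bsub>S\<^esub> j \<otimes>\<^bsub>S\<^esub> f r' \<oplus>\<^bsub>S\<^esub> j \<otimes>\<^bsub>S\<^esub> j' \<in> J"
      using x y j by (intro J.a_closed J.I_l_closed J.I_r_closed) auto
    ultimately show "x \<otimes>\<^bsub>RDirProd R S\<^esub> y \<in> ?H"
      using x y by (auto simp: amalgamation_carrier)
    have "x \<oplus>\<^bsub>RDirProd R S\<^esub> y = (r \<oplus>\<^bsub>R\<^esub> r', f (r \<oplus>\<^bsub>R\<^esub> r') \<oplus>\<^bsub>S\<^esub> (j \<oplus>\<^bsub>S\<^esub> j'))"
      using x y j by (simp add: S.a_ac)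
    then show "x \<oplus>\<^bsub>RDirProd R S\<^esub> y \<in> ?H"
      using x y J.a_closed by (auto simp: amalgamation_carrier)
    show "x \<otimes>\<^bsub>RDirProd R S\<^esub> y = y \<otimes>\<^bsub>RDirProd R S\<^esub> x"
      using x y j by (simp add: R.m_comm S.m_comm)
  qed
qed

lemma cring_amalgamation:
  assumes "cring R" "cring S" "f \<in> ring_hom R S" "ideal J S"
  shows "cring (amalgamation R S f J)"
proof -
  interpret D: ring "RDirProd R S"
    using RDirProd_ring[OF cring.axioms(1) cring.axioms(1)] assms(1,2) .
  have sub: "subcring (carrier (amalgamation R S f J)) (RDirProd R S)"
    using subcring_amalgamation[OF assms] .
  show ?thesis
    using D.subcring_iff[OF subcringE(1)[OF sub]] sub by (simp add: amalgamation_def)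
qed

lemma fst_ring_hom_amalgamation: "fst \<in> ring_hom (amalgamation R S f J) R"
proof (rule ring_hom_memI)
  fix x y assume "x \<in> carrier (amalgamation R S f J)" "y \<in> carrier (amalgamation R S f J)"
  then show "fst x \<in> carrier R"
    and "fst (x \<otimes>\<^bsub>amalgamation R S f J\<^esub> y) = fst x \<otimes>\<^bsub>R\<^esub> fst y"
    and "fst (x \<oplus>\<^bsub>amalgamation R S f J\<^esub> y) = fst x \<oplus>\<^bsub>R\<^esub> fst y"
    by (auto simp: amalgamation_carrier)
qed simp

lemma snd_ring_hom_amalgamation:
  assumes "f \<in> ring_hom R S" "ideal J S"
  shows "snd \<in> ring_hom (amalgamation R S f J) S"
proof (rule ring_hom_memI)
  interpret J: ideal J S by fact
  have "carrier (amalgamation R S f J) \<subseteq> carrier R \<times> carrier S"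
    using amalgamation_carrier_subset[OF assms(1) J.ring_axioms J.a_subset] .
  then show "snd x \<in> carrier S" if "x \<in> carrier (amalgamation R S f J)" for x
    using that by auto
  fix x y assume "x \<in> carrier (amalgamation R S f J)" "y \<in> carrier (amalgamation R S f J)"
  then show "snd (x \<otimes>\<^bsub>amalgamation R S f J\<^esub> y) = snd x \<otimes>\<^bsub>S\<^esub> snd y"
    and "snd (x \<oplus>\<^bsub>amalgamation R S f J\<^esub> y) = snd x \<oplus>\<^bsub>S\<^esub> snd y"
    by (auto simp: amalgamation_carrier)
qed simp

lemma fst_image_amalgamation:
  assumes "J \<noteq> {}"
  shows "fst ` carrier (amalgamation R S f J) = carrier R"
proof
  show "fst ` carrier (amalgamation R S f J) \<subseteq> carrier R"
    by (auto simp: amalgamation_carrier)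
  obtain j where "j \<in> J" using assms by blast
  then have "(r, f r \<oplus>\<^bsub>S\<^esub> j) \<in> carrier (amalgamation R S f J)" if "r \<in> carrier R" for r
    using that by (auto simp: amalgamation_carrier)
  then show "carrier R \<subseteq> fst ` carrier (amalgamation R S f J)"
    by (metis fst_conv image_eqI subsetI)
qed

lemma snd_image_amalgamation:
  assumes "f \<in> ring_hom R S" "f ` carrier R = carrier S" "ideal J S"
  shows "snd ` carrier (amalgamation R S f J) = carrier S"
proof
  interpret J: ideal J S by fact
  show "snd ` carrier (amalgamation R S f J) \<subseteq> carrier S"
    using amalgamation_carrier_subset[OF assms(1) J.ring_axioms J.a_subset] by auto
  have "(r, f r) \<in> carrier (amalgamation R S f J)" if "r \<in> carrier R" for r
  proof -
    have "f r = f r \<oplus>\<^bsub>S\<^esub> \<zero>\<^bsub>S\<^esub>"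
      using that assms(1) J.r_zero ring_hom_closed by metis
    then show ?thesis
      using that J.zero_closed by (auto simp: amalgamation_carrier)
  qed
  then show "carrier S \<subseteq> snd ` carrier (amalgamation R S f J)"
    using assms(2) by (metis image_subset_iff snd_conv image_eqI)
qed

lemma amalgamation_kernels_annihilate:
  assumes "ring R" "ring S" "f \<in> ring_hom R S" "J \<subseteq> carrier S"
  shows "\<forall>x\<in>a_kernel (amalgamation R S f J) R fst. \<forall>y\<in>a_kernel (amalgamation R S f J) S snd.
           x \<otimes>\<^bsub>amalgamation R S f J\<^esub> y = \<zero>\<^bsub>amalgamation R S f J\<^esub>"
proof (intro ballI)
  fix x y
  assume "x \<in> a_kernel (amalgamation R S f J) R fst" "y \<in> a_kernel (amalgamation R S f J) S snd"
  then have "x \<in> carrier R \<times> carrier S" "y \<in> carrier R \<times> carrier S" "fst x = \<zero>\<^bsub>R\<^esub>" "snd y = \<zero>\<^bsub>S\<^esub>"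
    using amalgamation_carrier_subset[OF assms(3,2,4)] by (auto simp: a_kernel_def')
  then obtain s r where "x = (\<zero>\<^bsub>R\<^esub>, s)" "y = (r, \<zero>\<^bsub>S\<^esub>)" "r \<in> carrier R" "s \<in> carrier S"
    by (metis mem_Times_iff prod.collapse)
  then show "x \<otimes>\<^bsub>amalgamation R S f J\<^esub> y = \<zero>\<^bsub>amalgamation R S f J\<^esub>"
    using assms(1,2) by (simp add: ring.ring_simprules)
qed

theorem theorem4p7:
  fixes R :: "('a, 'm) ring_scheme" and S :: "('b, 'n) ring_scheme" and f :: "'a \<Rightarrow> 'b"
    and J :: "'b set"
  assumes "cring R" and "cring S"
    and "f \<in> ring_hom R S" and "f ` carrier R = carrier S"
    and "ideal J S" and "J \<noteq> {\<zero>\<^bsub>S\<^esub>}" and "J \<noteq> carrier S"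
  shows "properly_zipped (amalgamation R S f J) \<longleftrightarrow> properly_zipped R"
proof -
  interpret R: cring R by fact
  interpret S: cring S by fact
  interpret J: ideal J S by fact
  let ?A = "amalgamation R S f J"
  have A: "cring ?A"
    using cring_amalgamation assms(1,2,3,5) .
  have fst: "ring_hom_ring ?A R fst"
    using ring_hom_ringI2[OF cring.axioms(1)[OF A] R.ring_axioms fst_ring_hom_amalgamation] .
  have snd: "ring_hom_ring ?A S snd"
    using ring_hom_ringI2[OF cring.axioms(1)[OF A] S.ring_axioms snd_ring_hom_amalgamation[OF assms(3,5)]] .
  have fst_onto: "fst ` carrier ?A = carrier R"
    by (rule fst_image_amalgamation) (use J.zero_closed in blast)
  note snd_onto = snd_image_amalgamation[OF assms(3,4,5)]
  note annihilate = amalgamation_kernels_annihilate[OF R.ring_axioms S.ring_axioms assms(3) J.a_subset]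
  show ?thesis
  proof
    assume "properly_zipped ?A"
    then show "properly_zipped R"
      by (rule ring_hom_ring.properly_zipped_image[OF fst A fst_onto])
  next
    assume "properly_zipped R"
    moreover have "properly_zipped S"
      using ring_hom_ring.properly_zipped_image[OF ring_hom_ringI2[OF R.ring_axioms S.ring_axioms assms(3)]
          assms(1,4) \<open>properly_zipped R\<close>] .
    ultimately show "properly_zipped ?A"
      using properly_zipped_if_kernels_annihilate[OF fst assms(1) fst_onto _ snd assms(2) snd_onto _ annihilate]
      by blast
  qed
qed

end
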